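(* In the setting below, for all limit ordinals $\alpha<\beta$ and all natural numbers $n\geq0$, $M_{\alpha+n}\subseteq M_{\beta+n}$.
   Context: Work in ZFA (ZF with a set $A$ of atoms, i.e. urelements that have no elements), extended by a primitive binary relation $\preccurlyeq$ on $A$, with Separation and Replacement holding for formulas mentioning $\preccurlyeq$. $A$ is an infinite set of atoms and $\preccurlyeq$ is a pre-ordering (reflexive, transitive) on $A$ with no minimal elements: for every $a\in A$ there is $b\in A$ with $b\preccurlyeq a$ and not $a\preccurlyeq b$. For $a\in A$, $pr(a)=\{b\in A:b\preccurlyeq a\}$; $LO(A,\preccurlyeq)$ is the set of nonempty $x\subseteq A$ with $pr(a)\subseteq x$ for all $a\in x$. For a set $X$ of sets, $LO(X,\subseteq)$ is the set of nonempty $x\subseteq X$ such that for every $y\in x$ and every $z\in X$ with $z\subseteq y$, $z\in x$. The magmatic hierarchy: $M_1=LO(A,\preccurlyeq)$; $M_{\alpha+1}=LO(M_\alpha,\subseteq)$ for $\alpha\geq1$; $M_\alpha=\bigcup_{1\leq\beta<\alpha}M_\beta$ for limit $\alpha$; $M=\bigcup_{\alpha\geq1}M_\alpha$. Limit ordinals are nonzero. *)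

theory Defs
  imports Main
begin

text \<open>A universe of ZFA over a type 'u: membership is given by elts :: 'u => 'u set,
  A is the set of atoms (urelements). All other objects are sets. Separation and
  Replacement are stated second-order (for arbitrary HOL predicates / functions),
  so in particular they hold for formulas mentioning the pre-order le.\<close>

definition mem_rel :: "('u \<Rightarrow> 'u set) \<Rightarrow> ('u \<times> 'u) set" where
  "mem_rel elts = {(x, y). x \<in> elts y}"

definition zfa :: "('u \<Rightarrow> 'u set) \<Rightarrow> 'u set \<Rightarrow> bool" where
  "zfa elts A \<longleftrightarrow>
     (\<forall>a\<in>A. elts a = {})
   \<and> (\<exists>x. x \<notin> A \<and> elts x = A)
   \<and> (\<forall>x y. x \<notin> A \<longrightarrow> y \<notin> A \<longrightarrow> elts x = elts y \<longrightarrow> x = y)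
   \<and> wf (mem_rel elts)
   \<and> (\<forall>a b. \<exists>y. y \<notin> A \<and> elts y = {a, b})
   \<and> (\<forall>x X. X \<subseteq> elts x \<longrightarrow> (\<exists>y. y \<notin> A \<and> elts y = X))
   \<and> (\<forall>x (f :: 'u \<Rightarrow> 'u). \<exists>y. y \<notin> A \<and> elts y = f ` elts x)
   \<and> (\<forall>x. \<exists>y. y \<notin> A \<and> elts y = \<Union> (elts ` elts x))
   \<and> (\<forall>x. \<exists>y. y \<notin> A \<and> elts y = {z. z \<notin> A \<and> elts z \<subseteq> elts x})
   \<and> (\<exists>x. x \<notin> A \<and> (\<exists>e\<in>elts x. e \<notin> A \<and> elts e = {})
          \<and> (\<forall>y\<in>elts x. \<exists>s\<in>elts x. s \<notin> A \<and> elts s = insert y (elts y)))"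

definition preord_atoms :: "'u set \<Rightarrow> ('u \<Rightarrow> 'u \<Rightarrow> bool) \<Rightarrow> bool" where
  "preord_atoms A le \<longleftrightarrow> (\<forall>a\<in>A. le a a)
     \<and> (\<forall>a\<in>A. \<forall>b\<in>A. \<forall>c\<in>A. le a b \<longrightarrow> le b c \<longrightarrow> le a c)"

definition no_minimal :: "'u set \<Rightarrow> ('u \<Rightarrow> 'u \<Rightarrow> bool) \<Rightarrow> bool" where
  "no_minimal A le \<longleftrightarrow> (\<forall>a\<in>A. \<exists>b\<in>A. le b a \<and> \<not> le a b)"

definition pr :: "'u set \<Rightarrow> ('u \<Rightarrow> 'u \<Rightarrow> bool) \<Rightarrow> 'u \<Rightarrow> 'u set" where
  "pr A le a = {b \<in> A. le b a}"

definition LO_atoms :: "('u \<Rightarrow> 'u set) \<Rightarrow> 'u set \<Rightarrow> ('u \<Rightarrow> 'u \<Rightarrow> bool) \<Rightarrow> 'u set" where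
  "LO_atoms elts A le = {x. x \<notin> A \<and> elts x \<noteq> {} \<and> elts x \<subseteq> A
                          \<and> (\<forall>a\<in>elts x. pr A le a \<subseteq> elts x)}"

definition LO_sub :: "('u \<Rightarrow> 'u set) \<Rightarrow> 'u set \<Rightarrow> 'u set \<Rightarrow> 'u set" where
  "LO_sub elts A X = {x. x \<notin> A \<and> elts x \<noteq> {} \<and> elts x \<subseteq> X
                        \<and> (\<forall>y\<in>elts x. \<forall>z\<in>X. elts z \<subseteq> elts y \<longrightarrow> z \<in> elts x)}"

definition ord :: "('u \<Rightarrow> 'u set) \<Rightarrow> 'u set \<Rightarrow> 'u \<Rightarrow> bool" where
  "ord elts A x \<longleftrightarrow> x \<notin> A
     \<and> (\<forall>y\<in>elts x. y \<notin> A \<and> elts y \<subseteq> elts x)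
     \<and> (\<forall>y\<in>elts x. \<forall>z\<in>elts x. y \<in> elts z \<or> y = z \<or> z \<in> elts y)"

definition osucc :: "('u \<Rightarrow> 'u set) \<Rightarrow> 'u set \<Rightarrow> 'u \<Rightarrow> 'u" where
  "osucc elts A x = (THE y. y \<notin> A \<and> elts y = insert x (elts x))"

definition limit_ord :: "('u \<Rightarrow> 'u set) \<Rightarrow> 'u set \<Rightarrow> 'u \<Rightarrow> bool" where
  "limit_ord elts A x \<longleftrightarrow> ord elts A x \<and> elts x \<noteq> {}
     \<and> \<not> (\<exists>g\<in>elts x. elts x = insert g (elts g))"

text \<open>The magmatic hierarchy M_alpha (alpha an ordinal of the universe, alpha >= 1),
  as the collection of its elements; defined by recursion on membership.
  The value at 0 is irrelevant (set to empty).\<close>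
definition Mlev :: "('u \<Rightarrow> 'u set) \<Rightarrow> 'u set \<Rightarrow> ('u \<Rightarrow> 'u \<Rightarrow> bool) \<Rightarrow> 'u \<Rightarrow> 'u set" where
  "Mlev elts A le = wfrec (mem_rel elts) (\<lambda>M a.
     if elts a = {} then {}
     else if (\<exists>g\<in>elts a. elts a = insert g (elts g)) then
       (let g = (SOME g. g \<in> elts a \<and> elts a = insert g (elts g)) in
         if elts g = {} then LO_atoms elts A le else LO_sub elts A (M g))
     else \<Union> {M g | g. g \<in> elts a \<and> elts g \<noteq> {}})"

end

theory Submission
  imports Defs
begin

text \<open>Every level \<open>M\<^sub>\<gamma>\<close> is an initial segment of \<open>(M, \<subseteq>)\<close>: if \<open>y \<in> M\<^sub>\<gamma>\<close> and \<open>z \<in> M\<close>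
  with \<open>z \<subseteq> y\<close>, then \<open>z \<in> M\<^sub>\<gamma>\<close>. This is proved by \<open>\<in>\<close>-induction on \<open>y\<close>, since an element of
  \<open>M\<close> is either a lower set of atoms or a \<open>\<subseteq>\<close>-lower subset of some level, and the two kinds
  cannot be compared. The theorem then follows by induction on \<open>n\<close>: \<open>M\<^sub>\<alpha> \<subseteq> M\<^sub>\<beta>\<close> because
  both are unions of the levels below, and \<open>LO(X, \<subseteq>) \<subseteq> LO(Y, \<subseteq>)\<close> whenever \<open>X\<close> is an
  initial segment of \<open>Y\<close>.\<close>

lemma LO_sub_mono:
  assumes "X \<subseteq> Y" and "\<And>y z. y \<in> X \<Longrightarrow> z \<in> Y \<Longrightarrow> elts z \<subseteq> elts y \<Longrightarrow> z \<in> X"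
  shows "LO_sub elts A X \<subseteq> LO_sub elts A Y"
proof
  fix x assume x: "x \<in> LO_sub elts A X"
  have "z \<in> elts x" if "y \<in> elts x" "z \<in> Y" "elts z \<subseteq> elts y" for y z
  proof -
    have "y \<in> X" using x that(1) unfolding LO_sub_def by blast
    then have "z \<in> X" using assms(2) that(2,3) by blast
    then show ?thesis using x that(1,3) unfolding LO_sub_def by blast
  qed
  then show "x \<in> LO_sub elts A Y" using x assms(1) unfolding LO_sub_def by blast
qed

lemma LO_sub_transfer:
  assumes "y \<in> LO_sub elts A X" and "z \<in> LO_sub elts A Y" and "elts z \<subseteq> elts y"
    and "\<And>w u. w \<in> elts z \<Longrightarrow> u \<in> X \<Longrightarrow> elts u \<subseteq> elts w \<Longrightarrow> u \<in> Y"
  shows "z \<in> LO_sub elts A X"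
proof -
  have "elts z \<subseteq> X"
    using assms(1,3) unfolding LO_sub_def by blast
  moreover have "u \<in> elts z" if "w \<in> elts z" "u \<in> X" "elts u \<subseteq> elts w" for w u
    using assms(2) that assms(4)[OF that] unfolding LO_sub_def by blast
  ultimately show ?thesis
    using assms(2) unfolding LO_sub_def by blast
qed

lemma zfaD:
  assumes "zfa elts A"
  shows "wf (mem_rel elts)"
    and "\<And>x y. x \<notin> A \<Longrightarrow> y \<notin> A \<Longrightarrow> elts x = elts y \<Longrightarrow> x = y"
    and "\<And>a b. \<exists>y. y \<notin> A \<and> elts y = {a, b}"
    and "\<And>x. \<exists>y. y \<notin> A \<and> elts y = \<Union> (elts ` elts x)"
  using assms unfolding zfa_def by simp_all

lemma elts_osucc:
  assumes "zfa elts A"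
  shows "elts (osucc elts A x) = insert x (elts x)"
proof -
  obtain p where "elts p = {x}"
    using zfaD(3)[OF assms, of x x] by auto
  moreover obtain q where "elts q = {x, p}"
    using zfaD(3)[OF assms] by blast
  moreover obtain y where y: "y \<notin> A" "elts y = \<Union> (elts ` elts q)"
    using zfaD(4)[OF assms] by blast
  ultimately have y_succ: "elts y = insert x (elts x)"
    by auto
  have "osucc elts A x = y"
    unfolding osucc_def
    by (rule the_equality) (use y(1) y_succ zfaD(2)[OF assms] in auto)
  then show ?thesis using y_succ by simp
qed

lemma succ_limit_cases [case_names empty succ limit]:
  obtains "elts a = {}"
    | g where "elts a = insert g (elts g)"
    | "elts a \<noteq> {}" "\<not> (\<exists>g\<in>elts a. elts a = insert g (elts g))"
  by blast

locale wf_universe =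
  fixes elts :: "'u \<Rightarrow> 'u set" and A :: "'u set" and le :: "'u \<Rightarrow> 'u \<Rightarrow> bool"
  assumes wf_mem_rel: "wf (mem_rel elts)"
begin

abbreviation M :: "'u \<Rightarrow> 'u set" where
  "M \<equiv> Mlev elts A le"

lemma mem_induct [case_names step]:
  assumes "\<And>x. (\<And>y. y \<in> elts x \<Longrightarrow> P y) \<Longrightarrow> P x"
  shows "P a"
  using wf_mem_rel by (induction a rule: wf_induct_rule) (auto intro: assms simp: mem_rel_def)

lemma succ_pred_unique:
  assumes "elts a = insert g (elts g)" and "elts a = insert h (elts h)"
  shows "g = h"
proof (rule ccontr)
  assume "g \<noteq> h"
  then have "(g, h) \<in> mem_rel elts" and "(h, g) \<in> mem_rel elts"
    using assms by (auto simp: mem_rel_def)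
  then show False using wf_asym[OF wf_mem_rel] by blast
qed

lemma Mlev_unfold:
  "M a =
     (if elts a = {} then {}
     else if (\<exists>g\<in>elts a. elts a = insert g (elts g)) then
       (let g = (SOME g. g \<in> elts a \<and> elts a = insert g (elts g)) in
         if elts g = {} then LO_atoms elts A le else LO_sub elts A (M g))
     else \<Union> {M g | g. g \<in> elts a \<and> elts g \<noteq> {}})"
proof -
  have cut_M: "cut M (mem_rel elts) a g = M g" if "g \<in> elts a" for g
    using that by (intro cut_apply) (simp add: mem_rel_def)
  have "(SOME g. g \<in> elts a \<and> elts a = insert g (elts g)) \<in> elts a"
    if "\<exists>g\<in>elts a. elts a = insert g (elts g)"
    using someI_ex[of "\<lambda>g. g \<in> elts a \<and> elts a = insert g (elts g)"] that by blast
  moreover have "{cut M (mem_rel elts) a g | g. g \<in> elts a \<and> elts g \<noteq> {}}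
      = {M g | g. g \<in> elts a \<and> elts g \<noteq> {}}"
    using cut_M by metis
  ultimately show ?thesis
    by (subst Mlev_def, subst wfrec[OF wf_mem_rel]) (simp add: Let_def cut_M flip: Mlev_def)
qed

lemma Mlev_empty: "elts a = {} \<Longrightarrow> M a = {}"
  by (subst Mlev_unfold) simp

lemma Mlev_succ:
  assumes "elts a = insert g (elts g)"
  shows "M a = (if elts g = {} then LO_atoms elts A le else LO_sub elts A (M g))"
proof -
  have "(SOME h. h \<in> elts a \<and> elts a = insert h (elts h)) = g"
    using assms succ_pred_unique by (intro some_equality) auto
  then show ?thesis
    using assms by (subst Mlev_unfold) (auto simp: Let_def)
qed

lemma Mlev_limit:
  assumes "elts a \<noteq> {}" and "\<not> (\<exists>g\<in>elts a. elts a = insert g (elts g))"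
  shows "M a = \<Union> {M g | g. g \<in> elts a \<and> elts g \<noteq> {}}"
  using assms by (subst Mlev_unfold) simp

lemma Mlev_disjoint_atoms: "M a \<inter> A = {}"
proof (induction a rule: mem_induct)
  case (step a)
  show ?case
  proof (cases rule: succ_limit_cases[of elts a])
    case (succ g)
    have "LO_atoms elts A le \<inter> A = {}" and "LO_sub elts A (M g) \<inter> A = {}"
      unfolding LO_atoms_def LO_sub_def by blast+
    with succ show ?thesis by (simp add: Mlev_succ)
  qed (use step.IH in \<open>auto simp: Mlev_empty Mlev_limit\<close>)
qed

lemma Mlev_memE:
  assumes "y \<in> M c"
  obtains (atoms) "y \<in> LO_atoms elts A le" "LO_atoms elts A le \<subseteq> M c"
    | (sub) g where "y \<in> LO_sub elts A (M g)" "LO_sub elts A (M g) \<subseteq> M c"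
proof -
  have "(y \<in> LO_atoms elts A le \<and> LO_atoms elts A le \<subseteq> M c)
    \<or> (\<exists>g. y \<in> LO_sub elts A (M g) \<and> LO_sub elts A (M g) \<subseteq> M c)"
    using assms
  proof (induction c rule: mem_induct)
    case (step c)
    show ?case
    proof (cases rule: succ_limit_cases[of elts c])
      case empty
      then show ?thesis using step.prems by (simp add: Mlev_empty)
    next
      case (succ g)
      show ?thesis
      proof (cases "elts g = {}")
        case True
        then show ?thesis using step.prems Mlev_succ[OF succ] by simp
      next
        case False
        then show ?thesis using step.prems Mlev_succ[OF succ] by (simp add: exI[of _ g])
      qed
    next
      case limit
      then have "M c = \<Union> {M g | g. g \<in> elts c \<and> elts g \<noteq> {}}"
        by (rule Mlev_limit)
      with step.prems obtain g where g: "g \<in> elts c" "y \<in> M g" and "M g \<subseteq> M c"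
        by blast
      with step.IH[OF g] show ?thesis by (meson order_trans)
    qed
  qed
  with that show thesis by blast
qed

lemma Mlev_down_closed:
  "y \<in> M c \<Longrightarrow> z \<in> M d \<Longrightarrow> elts z \<subseteq> elts y \<Longrightarrow> z \<in> M c"
proof (induction y arbitrary: c d z rule: mem_induct)
  case (step y)
  have z_nonempty: "elts z \<noteq> {}"
    using \<open>z \<in> M d\<close> by (cases rule: Mlev_memE) (unfold LO_atoms_def LO_sub_def, blast+)
  from \<open>y \<in> M c\<close> show ?case
  proof (cases rule: Mlev_memE)
    case atoms
    from \<open>z \<in> M d\<close> show ?thesis
    proof (cases rule: Mlev_memE)
      case (sub g')
      then have "elts z \<inter> A = {}"
        using Mlev_disjoint_atoms[of g'] unfolding LO_sub_def by blast
      moreover have "elts z \<subseteq> A"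
        using atoms \<open>elts z \<subseteq> elts y\<close> unfolding LO_atoms_def by blast
      ultimately show ?thesis using z_nonempty by blast
    qed (use atoms in blast)
  next
    case (sub g)
    from \<open>z \<in> M d\<close> show ?thesis
    proof (cases rule: Mlev_memE)
      case atoms
      then have "elts z \<subseteq> A" unfolding LO_atoms_def by blast
      moreover have "elts z \<inter> A = {}"
        using sub \<open>elts z \<subseteq> elts y\<close> Mlev_disjoint_atoms[of g] unfolding LO_sub_def by blast
      ultimately show ?thesis using z_nonempty by blast
    next
      case z_sub: (sub g')
      have "z \<in> LO_sub elts A (M g)"
      proof (rule LO_sub_transfer[OF sub(1) z_sub(1) \<open>elts z \<subseteq> elts y\<close>])
        fix w u assume w: "w \<in> elts z" and u: "u \<in> M g" "elts u \<subseteq> elts w"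
        have "w \<in> elts y"
          using w \<open>elts z \<subseteq> elts y\<close> by blast
        moreover have "w \<in> M g'"
          using w z_sub(1) unfolding LO_sub_def by blast
        ultimately show "u \<in> M g'"
          using u by (rule step.IH)
      qed
      then show ?thesis using sub(2) by blast
    qed
  qed
qed

end

theorem lemma4p7:
  fixes elts :: "'u \<Rightarrow> 'u set" and A :: "'u set" and le :: "'u \<Rightarrow> 'u \<Rightarrow> bool"
    and \<alpha> \<beta> :: 'u and n :: nat
  assumes "zfa elts A" and "infinite A"
    and "preord_atoms A le" and "no_minimal A le"
    and "limit_ord elts A \<alpha>" and "limit_ord elts A \<beta>" and "\<alpha> \<in> elts \<beta>"
  shows "Mlev elts A le ((osucc elts A ^^ n) \<alpha>) \<subseteq> Mlev elts A le ((osucc elts A ^^ n) \<beta>)"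
proof -
  interpret wf_universe elts A le
    using zfaD(1)[OF assms(1)] by unfold_locales
  show ?thesis
  proof (induction n)
    case 0
    have M_limit: "M \<gamma> = \<Union> {M g | g. g \<in> elts \<gamma> \<and> elts g \<noteq> {}}"
      if "limit_ord elts A \<gamma>" for \<gamma>
      using that unfolding limit_ord_def by (intro Mlev_limit) simp_all
    have "elts \<alpha> \<subseteq> elts \<beta>"
      using assms(6,7) unfolding limit_ord_def ord_def by blast
    then show ?case
      unfolding funpow_0 M_limit[OF assms(5)] M_limit[OF assms(6)] by blast
  next
    case (Suc n)
    have M_osucc: "M (osucc elts A x) = LO_sub elts A (M x)" if "elts x \<noteq> {}" for x
      using Mlev_succ[OF elts_osucc[OF assms(1)]] that by simp
    have nonempty: "elts ((osucc elts A ^^ n) \<gamma>) \<noteq> {}" if "limit_ord elts A \<gamma>" for \<gamma>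
      using that elts_osucc[OF assms(1)] unfolding limit_ord_def by (cases n) simp_all
    have "LO_sub elts A (M ((osucc elts A ^^ n) \<alpha>)) \<subseteq> LO_sub elts A (M ((osucc elts A ^^ n) \<beta>))"
      using Suc.IH Mlev_down_closed by (rule LO_sub_mono)
    then show ?case
      using M_osucc[OF nonempty[OF assms(5)]] M_osucc[OF nonempty[OF assms(6)]] by simp
  qed
qed

end
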